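(* There is a comeager set $C\subseteq(\mathbb R^{\mathbb N})^{\mathbb N}$ such that $({=^{+2}}\restriction C)\le_B{=^+}$.
   Context: For an equivalence relation $E$ on $X$, the Friedman–Stanley jump $E^+$ is the equivalence relation on $X^{\mathbb N}$ given by $x\mathrel{E^+}y\iff\{[x(i)]_E:i\in\mathbb N\}=\{[y(i)]_E:i\in\mathbb N\}$. Here $=^+$ is $(=_{\mathbb R})^+$ on $\mathbb R^{\mathbb N}$ and $=^{+2}=(=^+)^+$ on $(\mathbb R^{\mathbb N})^{\mathbb N}$, with the product topologies. *)

theory Defs
  imports "HOL-Analysis.Analysis"
begin

definition FS_jump :: "('a \<Rightarrow> 'a \<Rightarrow> bool) \<Rightarrow> (nat \<Rightarrow> 'a) \<Rightarrow> (nat \<Rightarrow> 'a) \<Rightarrow> bool" where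
  "FS_jump E x y \<longleftrightarrow> (\<lambda>i. {z. E (x i) z}) ` UNIV = (\<lambda>i. {z. E (y i) z}) ` UNIV"

definition eq_plus :: "(nat \<Rightarrow> real) \<Rightarrow> (nat \<Rightarrow> real) \<Rightarrow> bool" where
  "eq_plus = FS_jump (=)"

definition eq_plus2 :: "(nat \<Rightarrow> nat \<Rightarrow> real) \<Rightarrow> (nat \<Rightarrow> nat \<Rightarrow> real) \<Rightarrow> bool" where
  "eq_plus2 = FS_jump eq_plus"

definition comeager :: "'a::topological_space set \<Rightarrow> bool" where
  "comeager C \<longleftrightarrow> (\<exists>G :: nat \<Rightarrow> 'a set. (\<forall>n. open (G n) \<and> closure (G n) = UNIV) \<and> (\<Inter>n. G n) \<subseteq> C)"

definition borel_reducible_on ::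
  "'a::topological_space set \<Rightarrow> ('a \<Rightarrow> 'a \<Rightarrow> bool) \<Rightarrow> ('b::topological_space \<Rightarrow> 'b \<Rightarrow> bool) \<Rightarrow> bool" where
  "borel_reducible_on C E F \<longleftrightarrow>
     (\<exists>f. f \<in> measurable (restrict_space borel C) borel \<and>
          (\<forall>x\<in>C. \<forall>y\<in>C. E x y \<longleftrightarrow> F (f x) (f y)))"

end

theory Submission imports Defs "HOL-Analysis.Analysis" begin

text \<open>
  On the comeager set of arrays \<open>x\<close> whose entries \<open>x i k\<close> are pairwise distinct, the rows
  \<open>range (x i)\<close> are disjoint, and \<open>x =\<^sup>+\<^sup>2 y\<close> says exactly that \<open>x\<close> and \<open>y\<close> have the same set of
  rows. A partition is determined by the equivalence relation \<open>\<Union>A. A \<times> A\<close> it induces, which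
  is a countable set of pairs of reals. Coding pairs of reals by a Borel injection
  \<open>\<real>\<^sup>2 \<rightarrow> \<real>\<close> and enumerating the codes of all pairs of entries in a common row gives a
  Borel reduction to \<open>=\<^sup>+\<close>.
\<close>

text \<open>Base 3 rather than 2, so that distinct digit sequences have distinct values.\<close>
definition ternary_value :: "(nat \<Rightarrow> bool) \<Rightarrow> real" where
  "ternary_value s = (\<Sum>m. of_bool (s m) * (1/3) ^ m)"

lemma summable_ternary_digits: "summable (\<lambda>m. of_bool (s m) * (1/3::real) ^ m)"
  by (rule summable_comparison_test[of _ "\<lambda>m. (1/3::real)^m"]) (auto simp: summable_geometric)

lemma ternary_value_less:
  assumes "s n" "\<not> t n" "\<And>m. m < n \<Longrightarrow> s m = t m"
  shows "ternary_value t < ternary_value s"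
proof -
  define d where "d m = (if m \<le> n then of_bool (t m) * (1/3) ^ m else (1/3::real) ^ m)" for m
  have d: "summable d"
    by (rule summable_comparison_test[of _ "\<lambda>m. (1/3::real)^m"])
       (auto simp: d_def summable_geometric)
  have tail: "(\<lambda>m. d (m + Suc n)) sums ((1/3) ^ Suc n * (3/2))"
  proof -
    have "(\<lambda>m. (1/3) ^ Suc n * (1/3::real) ^ m) sums ((1/3) ^ Suc n * (1 / (1 - 1/3)))"
      by (intro sums_mult geometric_sums) auto
    then show ?thesis by (simp add: d_def power_add mult_ac)
  qed
  have "ternary_value t \<le> suminf d"
    unfolding ternary_value_def
    by (rule suminf_le) (auto simp: d_def summable_ternary_digits d)
  also have "\<dots> = (1/3) ^ Suc n * (3/2) + (\<Sum>m<Suc n. d m)"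
    using suminf_split_initial_segment[OF d, of "Suc n"] tail by (simp add: sums_iff)
  also have "(\<Sum>m<Suc n. d m) = (\<Sum>m<n. of_bool (s m) * (1/3) ^ m)"
    using assms by (auto simp: d_def intro!: sum.cong)
  also have "(1/3) ^ Suc n * (3/2) + (\<Sum>m<n. of_bool (s m) * (1/3) ^ m)
               < (\<Sum>m<Suc n. of_bool (s m) * (1/3::real) ^ m)"
    using assms by simp
  also have "\<dots> \<le> ternary_value s"
    unfolding ternary_value_def
    by (rule sum_le_suminf[OF summable_ternary_digits]) auto
  finally show ?thesis .
qed

lemma inj_ternary_value: "inj ternary_value"
proof (rule injI, rule ccontr)
  fix s t assume eq: "ternary_value s = ternary_value t" and "s \<noteq> t"
  then obtain n where "s n \<noteq> t n" "\<And>m. m < n \<Longrightarrow> s m = t m"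
    using exists_least_iff[of "\<lambda>m. s m \<noteq> t m"] by (auto simp: fun_eq_iff)
  then show False
    using ternary_value_less[of s n t] ternary_value_less[of t n s] eq by (cases "s n") auto
qed

definition rat_cut :: "real \<Rightarrow> nat \<Rightarrow> bool" where
  "rat_cut a k \<longleftrightarrow> a < real_of_rat (from_nat k)"

lemma rat_cut_neq_if_less:
  assumes "a < b" shows "rat_cut a \<noteq> rat_cut b"
proof -
  obtain r where "a < real_of_rat r" "real_of_rat r < b"
    using Rats_dense_in_real[OF assms] by (auto simp: Rats_def)
  then have "rat_cut a (to_nat r) \<noteq> rat_cut b (to_nat r)"
    by (simp add: rat_cut_def)
  then show ?thesis by metis
qed

lemma inj_rat_cut: "inj rat_cut"
  by (rule injI) (metis linorder_neq_iff rat_cut_neq_if_less)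

definition interleave :: "(nat \<Rightarrow> 'a) \<Rightarrow> (nat \<Rightarrow> 'a) \<Rightarrow> nat \<Rightarrow> 'a" where
  "interleave s t m = (if even m then s (m div 2) else t (m div 2))"

lemma interleave_eq_iff: "interleave s t = interleave s' t' \<longleftrightarrow> s = s' \<and> t = t'"
proof
  assume eq: "interleave s t = interleave s' t'"
  have "s k = s' k \<and> t k = t' k" for k
    using fun_cong[OF eq, of "2 * k"] fun_cong[OF eq, of "2 * k + 1"] by (simp add: interleave_def)
  then show "s = s' \<and> t = t'" by auto
qed simp

definition real_pair_code :: "real \<Rightarrow> real \<Rightarrow> real" where
  "real_pair_code a b = ternary_value (interleave (rat_cut a) (rat_cut b))"

lemma inj_real_pair_code: "inj (case_prod real_pair_code)"
  by (rule injI) (auto simp: real_pair_code_def inj_eq[OF inj_ternary_value]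
                             interleave_eq_iff inj_eq[OF inj_rat_cut])

lemma borel_measurable_real_pair_code[measurable]:
  assumes [measurable]: "f \<in> borel_measurable M" "g \<in> borel_measurable M"
  shows "(\<lambda>x. real_pair_code (f x) (g x)) \<in> borel_measurable M"
  unfolding real_pair_code_def ternary_value_def interleave_def rat_cut_def of_bool_def
  by measurable

lemma FS_jump_iff_image_eq:
  assumes "\<And>a b. E a b \<longleftrightarrow> \<phi> a = \<phi> b"
  shows "FS_jump E x y \<longleftrightarrow> \<phi> ` range x = \<phi> ` range y"
proof -
  have classes: "{z. E a z} = \<phi> -` {\<phi> a}" for a
    using assms by auto
  have "inj_on (\<lambda>S. \<phi> -` {S}) (range \<phi>)"
    by (rule inj_onI) auto
  then have "(\<lambda>S. \<phi> -` {S}) ` \<phi> ` range x = (\<lambda>S. \<phi> -` {S}) ` \<phi> ` range y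
               \<longleftrightarrow> \<phi> ` range x = \<phi> ` range y"
    by (rule inj_on_image_eq_iff) auto
  then show ?thesis
    unfolding FS_jump_def classes image_image .
qed

lemma eq_plus_iff: "eq_plus u v \<longleftrightarrow> range u = range v"
  unfolding eq_plus_def using FS_jump_iff_image_eq[of "(=)" id] by simp

lemma eq_plus2_iff: "eq_plus2 x y \<longleftrightarrow> range ` range x = range ` range y"
  unfolding eq_plus2_def by (rule FS_jump_iff_image_eq) (rule eq_plus_iff)

lemma Image_Union_squares:
  assumes "disjoint F" "A \<in> F" "a \<in> A"
  shows "(\<Union>B\<in>F. B \<times> B) `` {a} = A"
  using assms by (auto dest: disjointD)

lemma inj_on_Union_squares: "inj_on (\<lambda>F. \<Union>A\<in>F. A \<times> A) {F. disjoint F \<and> {} \<notin> F}"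
proof -
  have "F \<subseteq> G" if "disjoint F" "{} \<notin> F" "disjoint G" "(\<Union>A\<in>F. A \<times> A) = (\<Union>B\<in>G. B \<times> B)"
    for F G :: "'a set set"
  proof
    fix A assume "A \<in> F"
    with \<open>{} \<notin> F\<close> obtain a where "a \<in> A" by (metis equals0I)
    with \<open>A \<in> F\<close> that(4) obtain B where "B \<in> G" "a \<in> B" by blast
    have "A = (\<Union>A\<in>F. A \<times> A) `` {a}"
      using Image_Union_squares[OF \<open>disjoint F\<close> \<open>A \<in> F\<close> \<open>a \<in> A\<close>] by simp
    also have "\<dots> = B"
      using Image_Union_squares[OF \<open>disjoint G\<close> \<open>B \<in> G\<close> \<open>a \<in> B\<close>] that(4) by simp
    finally show "A \<in> G" using \<open>B \<in> G\<close> by simp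
  qed
  then show ?thesis
    by (intro inj_onI) (simp add: subset_antisym)
qed

lemma disjoint_rows:
  assumes "inj (case_prod x)" shows "disjoint (range ` range x)"
proof (rule disjointI)
  fix A B assume "A \<in> range ` range x" "B \<in> range ` range x" "A \<noteq> B"
  then obtain i j where "A = range (x i)" "B = range (x j)" "i \<noteq> j" by auto
  with assms show "A \<inter> B = {}" by (auto simp: inj_def)
qed

definition row_pairs_code :: "(nat \<Rightarrow> nat \<Rightarrow> real) \<Rightarrow> nat \<Rightarrow> real" where
  "row_pairs_code x n = (case prod_decode n of (i, m) \<Rightarrow>
     case prod_decode m of (k, l) \<Rightarrow> real_pair_code (x i k) (x i l))"

lemma range_row_pairs_code:
  "range (row_pairs_code x) = case_prod real_pair_code ` (\<Union>A\<in>range ` range x. A \<times> A)"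
proof (intro set_eqI iffI)
  fix z assume "z \<in> range (row_pairs_code x)"
  then obtain i k l where "z = real_pair_code (x i k) (x i l)"
    by (auto simp: row_pairs_code_def split: prod.splits)
  then show "z \<in> case_prod real_pair_code ` (\<Union>A\<in>range ` range x. A \<times> A)"
    by force
next
  fix z assume "z \<in> case_prod real_pair_code ` (\<Union>A\<in>range ` range x. A \<times> A)"
  then obtain i k l where "z = row_pairs_code x (prod_encode (i, prod_encode (k, l)))"
    by (auto simp: row_pairs_code_def)
  then show "z \<in> range (row_pairs_code x)" by simp
qed

lemma eq_plus2_iff_row_pairs_code:
  assumes "inj (case_prod x)" "inj (case_prod y)"
  shows "eq_plus2 x y \<longleftrightarrow> eq_plus (row_pairs_code x) (row_pairs_code y)"
proof -
  have partitions: "range ` range x \<in> {F. disjoint F \<and> {} \<notin> F}"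
                   "range ` range y \<in> {F. disjoint F \<and> {} \<notin> F}"
    using disjoint_rows[OF assms(1)] disjoint_rows[OF assms(2)] by auto
  have "eq_plus (row_pairs_code x) (row_pairs_code y)
          \<longleftrightarrow> (\<Union>A\<in>range ` range x. A \<times> A) = (\<Union>A\<in>range ` range y. A \<times> A)"
    unfolding eq_plus_iff range_row_pairs_code by (rule inj_image_eq_iff[OF inj_real_pair_code])
  also have "\<dots> \<longleftrightarrow> range ` range x = range ` range y"
    by (rule inj_on_eq_iff[OF inj_on_Union_squares partitions])
  finally show ?thesis by (simp add: eq_plus2_iff)
qed

lemma borel_measurable_row_pairs_code: "row_pairs_code \<in> borel_measurable borel"
proof (rule measurable_coordinatewise_then_product)
  fix n
  obtain i k l where "prod_decode n = (i, prod_encode (k, l))"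
    by (metis prod_decode_inverse surj_pair)
  then have "(\<lambda>x. row_pairs_code x n) = (\<lambda>x. real_pair_code (x i k) (x i l))"
    by (simp add: row_pairs_code_def fun_eq_iff)
  moreover have "(\<lambda>x::nat\<Rightarrow>nat\<Rightarrow>real. x i k) \<in> borel_measurable borel" for i k
    using measurable_compose[OF measurable_product_coordinates[of i] measurable_product_coordinates[of k]]
    by simp
  ultimately show "(\<lambda>x. row_pairs_code x n) \<in> borel_measurable borel"
    by simp
qed

lemma comeager_countable_INT:
  assumes "countable I" "\<And>i. i \<in> I \<Longrightarrow> open (G i) \<and> closure (G i) = UNIV"
  shows "comeager (\<Inter>i\<in>I. G i)"
proof (cases "I = {}")
  case True
  then show ?thesis unfolding comeager_def by (intro exI[of _ "\<lambda>_. UNIV"]) auto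
next
  case False
  then have "range (from_nat_into I) = I"
    using assms(1) by (rule range_from_nat_into)
  then have "(\<Inter>i\<in>I. G i) = (\<Inter>n. G (from_nat_into I n))"
    by (metis image_image)
  with assms(2) False show ?thesis
    unfolding comeager_def by (intro exI[of _ "\<lambda>n. G (from_nat_into I n)"]) (auto simp: from_nat_into)
qed

lemma open_entries_neq: "open {x :: 'i \<Rightarrow> 'k \<Rightarrow> real. x i k \<noteq> x j l}"
proof -
  have "continuous_on UNIV (\<lambda>x :: 'i \<Rightarrow> 'k \<Rightarrow> real. x i k)" for i k
    by (rule continuous_on_product_then_coordinatewise[OF continuous_on_product_coordinates])
  then show ?thesis by (intro open_Collect_neq)
qed

lemma dense_entries_neq:
  assumes "(i, k) \<noteq> (j, l)"
  shows "closure {x :: 'i \<Rightarrow> 'k \<Rightarrow> real. x i k \<noteq> x j l} = UNIV"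
proof -
  have "x \<in> closure {x. x i k \<noteq> x j l}" for x :: "'i \<Rightarrow> 'k \<Rightarrow> real"
  proof (cases "x i k = x j l")
    case False
    then show ?thesis by (intro closure_subset[THEN subsetD]) simp
  next
    case True
    define h where "h t = (\<lambda>a b. if a = i \<and> b = k then x i k + t else x a b)" for t :: real
    have "continuous_on UNIV h"
    proof (intro continuous_on_coordinatewise_then_product)
      fix a b show "continuous_on UNIV (\<lambda>t. h t a b)"
        by (cases "a = i \<and> b = k") (auto simp: h_def intro: continuous_on_add)
    qed
    then have "(h \<longlongrightarrow> h 0) (at 0)"
      by (simp add: continuous_on_eq_continuous_at isContD)
    moreover have "h 0 = x"
      by (auto simp: h_def fun_eq_iff)
    moreover have "h t \<in> {x. x i k \<noteq> x j l}" if "t \<noteq> 0" for t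
    proof -
      have "h t i k = x j l + t"
        using True by (simp add: h_def)
      moreover have "h t j l = x j l"
        using assms by (auto simp: h_def)
      ultimately show ?thesis
        using that by simp
    qed
    then have "\<forall>\<^sub>F t in at 0. h t \<in> closure {x. x i k \<noteq> x j l}"
      unfolding eventually_at_filter by (auto intro!: always_eventually closure_subset[THEN subsetD])
    ultimately show ?thesis
      using Lim_in_closed_set[OF closed_closure] by fastforce
  qed
  then show ?thesis by blast
qed

lemma comeager_injective_arrays: "comeager {x :: 'i::countable \<Rightarrow> 'k::countable \<Rightarrow> real. inj (case_prod x)}"
proof -
  have "{x :: 'i \<Rightarrow> 'k \<Rightarrow> real. inj (case_prod x)}
          = (\<Inter>((i, k), (j, l))\<in>{(p, q). p \<noteq> q}. {x. x i k \<noteq> x j l})"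
    unfolding inj_def by fastforce
  moreover have "comeager \<dots>"
    by (intro comeager_countable_INT)
       (auto simp: open_entries_neq intro!: dense_entries_neq)
  ultimately show ?thesis by simp
qed

theorem claim1p6:
  shows "\<exists>C :: (nat \<Rightarrow> nat \<Rightarrow> real) set. comeager C \<and> borel_reducible_on C eq_plus2 eq_plus"
proof (intro exI conjI)
  show "comeager {x :: nat \<Rightarrow> nat \<Rightarrow> real. inj (case_prod x)}"
    by (rule comeager_injective_arrays)
  show "borel_reducible_on {x. inj (case_prod x)} eq_plus2 eq_plus"
    unfolding borel_reducible_on_def
    using measurable_restrict_space1[OF borel_measurable_row_pairs_code] eq_plus2_iff_row_pairs_code
    by blast
qed

end
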